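(* Let $n\ge 2$, $\theta_t,\theta_1,\theta_0,\kappa_1,\ldots,\kappa_{2n}\in\mathbb{C}$ with $n\theta_t+n\theta_1+\theta_0+\sum_{i=1}^{2n}\kappa_i=0$. Let $B_\xi=[b^{(\xi)}_{i,j}]$, $C_\xi=[c^{(\xi)}_{i,j}]$ ($\xi=t,1$) be $n\times n$ matrices, $t$ a nonzero parameter, and put $$\widetilde A_\xi=\begin{bmatrix}I_n\\ B_\xi\end{bmatrix}\begin{bmatrix}\theta_\xi I_n-C_\xi B_\xi,& C_\xi\end{bmatrix}\quad(\xi=t,1).$$ Suppose there are $2n\times2n$ matrices $\widetilde A_0$, zero outside its first row and with $(1,1)$-entry $\theta_0$, and $\widetilde A_\infty$, with diagonal $\kappa_1,\dots,\kappa_{2n}$ and zero outside its diagonal and first column, such that $\widetilde A_t+\widetilde A_1+\widetilde A_0+\widetilde A_\infty=0$. For $i=1,\dots,n$ define $$\mu_i=(-1)^{n-i}t^{-1}\frac{\Delta^{1,i+1,\ldots,n}_{i,i+1,\ldots,n}(C_1)}{\Delta^{i+1,\ldots,n}_{i+1,\ldots,n}(C_t)}\sum_{k=1}^{i}\frac{\Delta^{i,i+1,\ldots,n}_{k,i+1,\ldots,n}(C_t)}{\Delta^{i,\ldots,n}_{i,\ldots,n}(C_t)}\,b^{(t)}_{k,1},\qquad \lambda_i=(-1)^{n-i+1}t\,\frac{\Delta^{1,i+1,\ldots,n}_{i,i+1,\ldots,n}(C_t)}{\Delta^{1,i+1,\ldots,n}_{i,i+1,\ldots,n}(C_1)},$$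 and let $\beta_1=-\kappa_{n+1}$, $\beta_i=-\theta_t-\theta_1-\kappa_i-\kappa_{n+i}$ ($i=2,\dots,n$). Let $E_1=\operatorname{diag}[1,0,\ldots,0]$ and $E_{2n}=\operatorname{diag}[0,1,\ldots,1]$ ($n\times n$). Then $$\operatorname{tr}E_1C_tB_t=-\sum_{i=1}^n\lambda_i\mu_i,\qquad \operatorname{tr}E_1C_1B_t=t\sum_{i=1}^n\mu_i,\qquad \operatorname{tr}E_1C_tB_1=-\frac1t\sum_{i=1}^n\lambda_i(\lambda_i\mu_i+\beta_i),$$ $$\operatorname{tr}E_1C_1(B_t-B_1)E_{2n}C_tB_t=t\sum_{i=1}^n\mu_i\Big\{-\sum_{j=1}^{i-1}(\lambda_j\mu_j+\beta_j)-\beta_i-\kappa_{n+i}+\sum_{j=i+1}^n\lambda_j\mu_j\Big\},$$ $$\operatorname{tr}E_1C_t(B_t-B_1)E_{2n}C_tB_1=-\frac1t\sum_{i=1}^n\lambda_i(\lambda_i\mu_i+\beta_i)\Big\{\sum_{j=1}^{i-1}\lambda_j\mu_j-\beta_i-\kappa_{n+i}-\sum_{j=i+1}^n(\lambda_j\mu_j+\beta_j)\Big\}.$$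
   Context: $\Delta^{i_1,\ldots,i_r}_{j_1,\ldots,j_r}(A)$ denotes the minor determinant of a matrix $A$ formed from rows $i_1,\dots,i_r$ and columns $j_1,\dots,j_r$ (in this order); a minor with empty index sets is $1$. All denominators are assumed nonzero. The matrices $\widetilde A_t,\widetilde A_1,\widetilde A_0,\widetilde A_\infty$ are the (gauge-normalized) residue matrices at $x=t,1,0,\infty$ of a $2n\times 2n$ Fuchsian system $\partial_xY=(\widetilde A_t/(x-t)+\widetilde A_1/(x-1)+\widetilde A_0/x)Y$ of spectral type $\{(n,n),(n,n),(2n-1,1),(1^{2n})\}$. *)

theory Defs
  imports "Jordan_Normal_Form.Determinant"
begin

definition mtrace :: "'a::comm_ring_1 mat \<Rightarrow> 'a" where
  "mtrace A = (\<Sum>i<dim_row A. A $$ (i,i))"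

text \<open>Minor determinant with rows rs and columns cs, given as lists of
  1-based indices (in this order), as in the paper.  Empty index lists give 1.\<close>
definition minor :: "'a::comm_ring_1 mat \<Rightarrow> nat list \<Rightarrow> nat list \<Rightarrow> 'a" where
  "minor A rs cs = det (mat (length rs) (length cs) (\<lambda>(a,b). A $$ (rs!a - 1, cs!b - 1)))"

text \<open>Horizontal concatenation [X, Y] of matrices with the same number of rows.\<close>
definition hcat :: "'a::zero mat \<Rightarrow> 'a mat \<Rightarrow> 'a mat" where
  "hcat X Y = four_block_mat X Y (0\<^sub>m 0 (dim_col X)) (0\<^sub>m 0 (dim_col Y))"

definition Atilde :: "nat \<Rightarrow> complex \<Rightarrow> complex mat \<Rightarrow> complex mat \<Rightarrow> complex mat" where
  "Atilde n \<theta> B C = (1\<^sub>m n @\<^sub>r B) * hcat (\<theta> \<cdot>\<^sub>m 1\<^sub>m n - C * B) C"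

definition E1 :: "nat \<Rightarrow> complex mat" where
  "E1 n = mat n n (\<lambda>(i,j). if i = j \<and> i = 0 then 1 else 0)"
definition E2n :: "nat \<Rightarrow> complex mat" where
  "E2n n = mat n n (\<lambda>(i,j). if i = j \<and> i \<noteq> 0 then 1 else 0)"

text \<open>The canonical coordinates mu_i, lambda_i (1-based i); b^{(t)}_{k,1} = Bt $$ (k-1,0).\<close>
definition mu :: "nat \<Rightarrow> complex \<Rightarrow> complex mat \<Rightarrow> complex mat \<Rightarrow> complex mat \<Rightarrow> nat \<Rightarrow> complex" where
  "mu n t Bt Ct C1 i = (-1)^(n-i) * inverse t
     * minor C1 (1 # [i+1..<n+1]) [i..<n+1] / minor Ct [i+1..<n+1] [i+1..<n+1]
     * (\<Sum>k=1..i. minor Ct [i..<n+1] (k # [i+1..<n+1]) / minor Ct [i..<n+1] [i..<n+1]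
                    * Bt $$ (k-1, 0))"

definition lam :: "nat \<Rightarrow> complex \<Rightarrow> complex mat \<Rightarrow> complex mat \<Rightarrow> nat \<Rightarrow> complex" where
  "lam n t Ct C1 i = (-1)^(n-i+1) * t
     * minor Ct (1 # [i+1..<n+1]) [i..<n+1] / minor C1 (1 # [i+1..<n+1]) [i..<n+1]"

end

theory Submission
  imports Defs
begin

text \<open>
  Factor \<open>C\<^sub>t = V L\<close> with \<open>L\<close> unit lower triangular and \<open>V\<close> upper triangular; the ratios of
  minors of \<open>C\<^sub>t\<close> in the definition of \<open>\<mu>\<^sub>i\<close> are exactly the entries of \<open>L\<close> (Cramer's rule).
  The residue relation \<open>A\<^sub>t + A\<^sub>1 + A\<^sub>0 + A\<^sub>\<infinity> = 0\<close> forces rows \<open>2..n\<close> of \<open>C\<^sub>1\<close> and \<open>C\<^sub>t\<close> to be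
  opposite, so \<open>W = C\<^sub>1 L\<^sup>-\<^sup>1\<close> is \<open>-V\<close> outside its first row.  Every minor in \<open>\<lambda>\<^sub>i, \<mu>\<^sub>i\<close> then
  collapses to a triangular one, giving \<open>t \<mu>\<^sub>i = w\<^sub>i p\<^sub>i\<close> and \<open>\<lambda>\<^sub>i w\<^sub>i = -t u\<^sub>i\<close>, where \<open>u, w\<close> are the
  first rows of \<open>V, W\<close> and \<open>p, y\<close> the first columns of \<open>L B\<^sub>t, L B\<^sub>1\<close>.
  The relation \<open>B\<^sub>tC\<^sub>t + B\<^sub>1C\<^sub>1 = -diag(\<kappa>\<^sub>n\<^sub>+\<^sub>1, \<dots>)\<close> makes \<open>L B\<^sub>t V + L B\<^sub>1 W\<close> lower triangular, and
  \<open>C\<^sub>t(B\<^sub>t - B\<^sub>1)E\<^sub>2\<^sub>n\<close> is diagonal below its first row, so \<open>Z = L(B\<^sub>t - B\<^sub>1)E\<^sub>2\<^sub>nV\<close> is upper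
  triangular with entries \<open>-p\<^sub>iu\<^sub>j - y\<^sub>iw\<^sub>j\<close> above the diagonal.  Each trace is a \<open>(1,1)\<close>-entry of a
  product of these pieces, and expanding it gives the stated sums.
\<close>

lemma sum_eq_single_nonzero:
  assumes "finite A" "i \<in> A" "\<And>k. k \<in> A \<Longrightarrow> k \<noteq> i \<Longrightarrow> f k = 0"
  shows "sum f A = f i"
proof -
  have "sum f A = f i + sum f (A - {i})" using assms by (simp add: sum.remove)
  also have "sum f (A - {i}) = 0" using assms by (intro sum.neutral) auto
  finally show ?thesis by simp
qed

lemma sum_lessThan_split_first:
  "0 < (n::nat) \<Longrightarrow> (\<Sum>k<n. f k) = f 0 + (\<Sum>k\<in>{1..<n}. (f k :: 'a::comm_monoid_add))"
  by (simp add: atLeast0LessThan[symmetric] sum.atLeast_Suc_lessThan)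

lemma sum_atLeast_lessThan_shift:
  "i \<le> n \<Longrightarrow> (\<Sum>j\<in>{i..<n}. (f :: nat \<Rightarrow> 'a::comm_monoid_add) j) = (\<Sum>m<n-i. f (i+m))"
  using sum.shift_bounds_nat_ivl[of f 0 i "n-i"] by (simp add: atLeast0LessThan add.commute)

lemma sum_strict_upper_swap:
  "(\<Sum>i<n. \<Sum>j\<in>{Suc i..<n}. (f i j :: 'a::comm_monoid_add)) = (\<Sum>j<n. \<Sum>i<j. f i j)"
proof (induct n)
  case (Suc n)
  have "(\<Sum>i<Suc n. \<Sum>j\<in>{Suc i..<Suc n}. f i j) = (\<Sum>i<n. \<Sum>j\<in>{Suc i..<Suc n}. f i j)"
    by simp
  also have "\<dots> = (\<Sum>i<n. (\<Sum>j\<in>{Suc i..<n}. f i j) + f i n)"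
    by (rule sum.cong, auto)
  also have "\<dots> = (\<Sum>j<n. \<Sum>i<j. f i j) + (\<Sum>i<n. f i n)" using Suc by (simp add: sum.distrib)
  finally show ?case by simp
qed simp

lemma sum_atLeast1_atMost_shift: "(\<Sum>i=1..n. (f i :: 'a::comm_monoid_add)) = (\<Sum>i<n. f (Suc i))"
  by (simp add: sum.atLeast1_atMost_eq)

lemma sum_atLeast_Suc_atMost_shift:
  "(\<Sum>j=Suc i + 1..n. (g j :: 'a::comm_monoid_add)) = (\<Sum>j\<in>{Suc i..<n}. g (Suc j))"
proof (cases n)
  case (Suc m)
  have "(\<Sum>j=Suc i + 1..n. g j) = (\<Sum>j\<in>{Suc (Suc i)..Suc m}. g j)" using Suc by simp
  also have "\<dots> = (\<Sum>j\<in>{Suc i..m}. g (Suc j))" by (rule sum.shift_bounds_cl_Suc_ivl)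
  also have "{Suc i..m} = {Suc i..<n}" using Suc by auto
  finally show ?thesis .
qed simp

lemma sum_atLeast1_lessThan_shift:
  "(\<Sum>j=1..<Suc i. (g j :: 'a::comm_monoid_add)) = (\<Sum>j<i. g (Suc j))"
  using sum.shift_bounds_Suc_ivl[of g 0 i] by (simp add: atLeast0LessThan)

lemma sum_bilinear_upper_rank_two:
  fixes u w p y D :: "nat \<Rightarrow> complex" and Z :: "nat \<Rightarrow> nat \<Rightarrow> complex"
  assumes Z: "\<And>i j. i < n \<Longrightarrow> j < n \<Longrightarrow>
    Z i j = (if j < i then 0 else if j = i then D i else - p i * u j - y i * w j)"
  shows "(\<Sum>i<n. \<Sum>j<n. w i * Z i j * p j)
         = (\<Sum>i<n. w i * p i * (- (\<Sum>j<i. w j * y j) + D i - (\<Sum>j\<in>{Suc i..<n}. u j * p j)))"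
proof -
  have row: "(\<Sum>j<n. w i * Z i j * p j)
      = w i * D i * p i - (\<Sum>j\<in>{Suc i..<n}. w i * p i * (u j * p j)) - (\<Sum>j\<in>{Suc i..<n}. w j * p j * (w i * y i))"
    if i: "i < n" for i
  proof -
    have split: "{..<n} = {..<i} \<union> ({i} \<union> {Suc i..<n})" using i by auto
    have "(\<Sum>j<n. w i * Z i j * p j)
        = (\<Sum>j<i. w i * Z i j * p j) + (w i * Z i i * p i + (\<Sum>j\<in>{Suc i..<n}. w i * Z i j * p j))"
      unfolding split by (subst sum.union_disjoint, simp, simp, force, subst sum.union_disjoint, auto)
    also have "(\<Sum>j<i. w i * Z i j * p j) = 0" using Z i by simp
    also have "(\<Sum>j\<in>{Suc i..<n}. w i * Z i j * p j)
        = (\<Sum>j\<in>{Suc i..<n}. w i * (- p i * u j - y i * w j) * p j)"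
      using Z i by (intro sum.cong) auto
    finally show ?thesis using Z i by (simp add: sum_subtractf sum_negf algebra_simps)
  qed
  have "(\<Sum>i<n. \<Sum>j<n. w i * Z i j * p j) = (\<Sum>i<n. w i * D i * p i)
     - (\<Sum>i<n. \<Sum>j\<in>{Suc i..<n}. w i * p i * (u j * p j))
     - (\<Sum>i<n. \<Sum>j\<in>{Suc i..<n}. w j * p j * (w i * y i))"
    using row by (simp add: sum_subtractf)
  also have "(\<Sum>i<n. \<Sum>j\<in>{Suc i..<n}. w j * p j * (w i * y i)) = (\<Sum>j<n. \<Sum>i<j. w j * p j * (w i * y i))"
    by (rule sum_strict_upper_swap)
  finally show ?thesis by (simp add: sum_distrib_left sum_subtractf sum.distrib algebra_simps)
qed

lemma index_mult_mat_sum: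
  assumes "A \<in> carrier_mat n m" "B \<in> carrier_mat m k" "i < n" "j < k"
  shows "(A * B) $$ (i,j) = (\<Sum>l<m. A $$ (i,l) * B $$ (l,j))"
  using assms by (simp add: scalar_prod_def atLeast0LessThan)

lemma det_unit_lower_triangular:
  assumes M: "M \<in> carrier_mat m m" and up: "\<And>a b. a < b \<Longrightarrow> b < m \<Longrightarrow> M $$ (a,b) = 0"
    and dg: "\<And>a. a < m \<Longrightarrow> M $$ (a,a) = 1"
  shows "det M = (1::'a::comm_ring_1)"
proof -
  have "det M = prod_list (diag_mat M)" by (rule det_lower_triangular[OF up M])
  also have "diag_mat M = replicate m 1"
    using M dg by (intro nth_equalityI) (auto simp: diag_mat_def)
  finally show ?thesis by simp
qed

text \<open>Back substitution, from the last row upwards.\<close>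
lemma lower_zero_of_upper_triangular_mult:
  assumes G: "G \<in> carrier_mat n n" and Gu: "\<And>i j. j < i \<Longrightarrow> i < n \<Longrightarrow> G $$ (i,j) = 0"
    and Gd: "\<And>i. a \<le> i \<Longrightarrow> i < n \<Longrightarrow> G $$ (i,i) \<noteq> 0"
    and V: "V \<in> carrier_mat n n"
    and GV: "\<And>i j. a \<le> i \<Longrightarrow> i < n \<Longrightarrow> j < i \<Longrightarrow> (G * V) $$ (i,j) = 0"
  shows "a \<le> i \<Longrightarrow> i < n \<Longrightarrow> j < i \<Longrightarrow> (V $$ (i,j) :: 'a :: idom) = 0"
proof (induct "n - i" arbitrary: i j rule: less_induct)
  case (less i)
  have "(G * V) $$ (i,j) = (\<Sum>k<n. G $$ (i,k) * V $$ (k,j))"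
    using less by (intro index_mult_mat_sum[OF G V]) auto
  also have "\<dots> = G $$ (i,i) * V $$ (i,j)"
  proof (rule sum_eq_single_nonzero)
    fix k assume k: "k \<in> {..<n}" "k \<noteq> i"
    show "G $$ (i,k) * V $$ (k,j) = 0"
    proof (cases "k < i")
      case True thus ?thesis using Gu less k by simp
    next
      case False
      hence "V $$ (k,j) = 0" using less k by (intro less(1)) auto
      thus ?thesis by simp
    qed
  qed (insert less, auto)
  finally show ?case using GV[of i j] Gd[of i] less by simp
qed

lemma upper_triangular_mult_diag:
  assumes G: "G \<in> carrier_mat n n" and Gu: "\<And>i j. j < i \<Longrightarrow> i < n \<Longrightarrow> G $$ (i,j) = 0"
    and V: "V \<in> carrier_mat n n" and i: "i < n"
    and Vl: "\<And>k. i < k \<Longrightarrow> k < n \<Longrightarrow> V $$ (k,i) = 0"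
  shows "(G * V) $$ (i,i) = G $$ (i,i) * (V $$ (i,i) :: 'a :: comm_ring_1)"
proof -
  have "(G * V) $$ (i,i) = (\<Sum>k<n. G $$ (i,k) * V $$ (k,i))"
    using i by (intro index_mult_mat_sum[OF G V]) auto
  also have "\<dots> = G $$ (i,i) * V $$ (i,i)"
    by (rule sum_eq_single_nonzero, insert Gu Vl i, auto simp: nat_neq_iff)
  finally show ?thesis .
qed

definition submat_list :: "'a mat \<Rightarrow> nat list \<Rightarrow> nat list \<Rightarrow> 'a mat" where
  "submat_list A rs cs = mat (length rs) (length cs) (\<lambda>(a,b). A $$ (rs!a, cs!b))"

lemma submat_list_carrier[simp]: "submat_list A rs cs \<in> carrier_mat (length rs) (length cs)"
  and dim_submat_list[simp]: "dim_row (submat_list A rs cs) = length rs" "dim_col (submat_list A rs cs) = length cs"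
  and index_submat_list[simp]:
    "a < length rs \<Longrightarrow> b < length cs \<Longrightarrow> submat_list A rs cs $$ (a,b) = A $$ (rs!a, cs!b)"
  unfolding submat_list_def by simp_all

lemma minor_eq_det_submat_list:
  "minor A rs cs = det (submat_list A (map (\<lambda>x. x - 1) rs) (map (\<lambda>x. x - 1) cs))"
  unfolding minor_def submat_list_def by (intro arg_cong[of _ _ det] eq_matI) auto

lemma map_pred_upt: "map (\<lambda>x. x - 1) [a+1..<b+1] = [a..<b]"
  and map_pred_upt_Suc: "map (\<lambda>x. x - 1) [Suc a..<b+1] = [a..<b]"
  by (induct b) auto

lemma cons_upt_nth: "i < n \<Longrightarrow> m < n - i \<Longrightarrow> (k # [Suc i..<n]) ! m = (if m = 0 then k else i + m)"
  by (cases m) auto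

lemma submat_list_mult:
  assumes A: "A \<in> carrier_mat n n" and B: "B \<in> carrier_mat n n"
    and ks: "distinct ks" "set ks \<subseteq> {..<n}"
    and rs: "set rs \<subseteq> {..<n}" and cs: "set cs \<subseteq> {..<n}"
    and vanish: "\<And>r c k. r \<in> set rs \<Longrightarrow> c \<in> set cs \<Longrightarrow> k < n \<Longrightarrow> k \<notin> set ks \<Longrightarrow> A $$ (r,k) * B $$ (k,c) = 0"
  shows "submat_list (A * B) rs cs = submat_list A rs ks * submat_list B ks cs"
proof (rule eq_matI)
  fix a b assume "a < dim_row (submat_list A rs ks * submat_list B ks cs)"
    and "b < dim_col (submat_list A rs ks * submat_list B ks cs)"
  hence a: "a < length rs" "b < length cs" by auto
  hence ra: "rs!a < n" "cs!b < n" using rs cs nth_mem by blast+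
  have "submat_list (A*B) rs cs $$ (a,b) = (\<Sum>k<n. A $$ (rs!a,k) * B $$ (k, cs!b))"
    using a index_mult_mat_sum[OF A B ra] by simp
  also have "\<dots> = (\<Sum>k\<in>set ks. A $$ (rs!a,k) * B $$ (k, cs!b))"
    by (rule sum.mono_neutral_right, insert ks vanish a nth_mem, auto)
  also have "\<dots> = (\<Sum>m<length ks. A $$ (rs!a, ks!m) * B $$ (ks!m, cs!b))"
    by (rule sum.reindex_bij_betw[symmetric], rule bij_betw_nth[OF ks(1)], auto)
  also have "\<dots> = (submat_list A rs ks * submat_list B ks cs) $$ (a,b)"
    using a by (subst index_mult_mat_sum[of _ "length rs" "length ks" _ "length cs"], auto)
  finally show "submat_list (A * B) rs cs $$ (a, b) = (submat_list A rs ks * submat_list B ks cs) $$ (a, b)" .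
qed auto

subsection \<open>A UL decomposition by Cramer's rule\<close>

definition trailing_block :: "'a mat \<Rightarrow> nat \<Rightarrow> nat \<Rightarrow> 'a mat" where
  "trailing_block C n i = submat_list C [i..<n] [i..<n]"

lemma trailing_block_carrier: "trailing_block C n i \<in> carrier_mat (n-i) (n-i)"
  using submat_list_carrier[of C "[i..<n]" "[i..<n]"] unfolding trailing_block_def by simp

definition ul_lower :: "complex mat \<Rightarrow> nat \<Rightarrow> complex mat" where
  "ul_lower C n = mat n n (\<lambda>(i,k). det (submat_list C [i..<n] (k # [Suc i..<n])) / det (trailing_block C n i))"

text \<open>Cramer's rule gives \<open>ul_lower C n = ul_upper_inv C n * C\<close>, so \<open>C * (ul_lower C n)\<^sup>-\<^sup>1\<close> is the inverse
  of an upper triangular matrix.\<close>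
definition ul_upper_inv :: "complex mat \<Rightarrow> nat \<Rightarrow> complex mat" where
  "ul_upper_inv C n = mat n n (\<lambda>(i,j). if i \<le> j then adj_mat (trailing_block C n i) $$ (0, j - i) / det (trailing_block C n i) else 0)"

lemma ul_lower_carrier: "ul_lower C n \<in> carrier_mat n n"
  unfolding ul_lower_def by simp

lemma ul_lower_cramer:
  assumes C: "C \<in> carrier_mat n n" and i: "i < n" and k: "k < n"
    and d: "det (trailing_block C n i) \<noteq> 0"
  shows "ul_lower C n $$ (i,k) = (\<Sum>m<n-i. adj_mat (trailing_block C n i) $$ (0,m) * C $$ (i+m,k)) / det (trailing_block C n i)"
proof -
  let ?A = "trailing_block C n i" let ?d = "det ?A" let ?s = "vec (n-i) (\<lambda>m. C $$ (i+m, k))"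
  let ?x = "(1 / ?d) \<cdot>\<^sub>v (adj_mat ?A *\<^sub>v ?s)"
  have A: "?A \<in> carrier_mat (n-i) (n-i)" by (rule trailing_block_carrier)
  have adj: "adj_mat ?A \<in> carrier_mat (n-i) (n-i)" "?A * adj_mat ?A = ?d \<cdot>\<^sub>m 1\<^sub>m (n-i)"
    using adj_mat[OF A] by auto
  have s: "?s \<in> carrier_vec (n-i)" by simp
  have x: "?x \<in> carrier_vec (n-i)" using adj by simp
  have Ax: "?A *\<^sub>v ?x = ?s"
  proof -
    have "?A *\<^sub>v ?x = (1 / ?d) \<cdot>\<^sub>v (?A *\<^sub>v (adj_mat ?A *\<^sub>v ?s))"
      using A adj s by (simp add: mult_mat_vec)
    also have "?A *\<^sub>v (adj_mat ?A *\<^sub>v ?s) = (?A * adj_mat ?A) *\<^sub>v ?s"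
      using assoc_mult_mat_vec[OF A adj(1) s] by simp
    also have "\<dots> = ?d \<cdot>\<^sub>v ?s" unfolding adj(2) using s by auto
    finally show ?thesis using d s by (auto simp: smult_smult_assoc)
  qed
  have rc: "replace_col ?A ?s 0 = submat_list C [i..<n] (k # [Suc i..<n])"
    by (rule eq_matI, insert i, auto simp: replace_col_def trailing_block_def cons_upt_nth)
  have "det (submat_list C [i..<n] (k # [Suc i..<n])) = ?x $ 0 * ?d"
    using cramer_lemma_mat[OF A x, of 0] i unfolding Ax rc by simp
  hence "ul_lower C n $$ (i,k) = ?x $ 0" unfolding ul_lower_def using i k d by simp
  also have "\<dots> = (\<Sum>m<n-i. adj_mat ?A $$ (0,m) * C $$ (i+m,k)) / ?d"
    using i adj by (simp add: scalar_prod_def atLeast0LessThan sum_divide_distrib)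
  finally show ?thesis .
qed

lemma ul_lower_eq_mult:
  assumes C: "C \<in> carrier_mat n n" and d: "\<And>i. i < n \<Longrightarrow> det (trailing_block C n i) \<noteq> 0"
  shows "ul_lower C n = ul_upper_inv C n * C"
proof (rule eq_matI)
  fix i k assume "i < dim_row (ul_upper_inv C n * C)" "k < dim_col (ul_upper_inv C n * C)"
  hence i: "i < n" and k: "k < n" using C by (auto simp: ul_upper_inv_def)
  let ?G = "ul_upper_inv C n"
  have G: "?G \<in> carrier_mat n n" unfolding ul_upper_inv_def by simp
  have "(?G * C) $$ (i,k) = (\<Sum>j<n. ?G $$ (i,j) * C $$ (j,k))"
    by (rule index_mult_mat_sum[OF G C i k])
  also have "\<dots> = (\<Sum>j\<in>{i..<n}. ?G $$ (i,j) * C $$ (j,k))"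
    by (rule sum.mono_neutral_right, insert i, auto simp: ul_upper_inv_def)
  also have "\<dots> = (\<Sum>m<n-i. ?G $$ (i,i+m) * C $$ (i+m,k))"
    using i by (simp add: sum_atLeast_lessThan_shift)
  also have "\<dots> = (\<Sum>m<n-i. adj_mat (trailing_block C n i) $$ (0,m) * C $$ (i+m,k)) / det (trailing_block C n i)"
    by (simp add: sum_divide_distrib ul_upper_inv_def)
  also have "\<dots> = ul_lower C n $$ (i,k)" using ul_lower_cramer[OF C i k d[OF i]] by simp
  finally show "ul_lower C n $$ (i,k) = (?G * C) $$ (i,k)" by simp
qed (insert C, auto simp: ul_lower_def ul_upper_inv_def)

lemma ul_lower_upper_zero:
  assumes C: "C \<in> carrier_mat n n" and ik: "i < k" "k < n"
  shows "ul_lower C n $$ (i,k) = 0"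
proof -
  let ?M = "submat_list C [i..<n] (k # [Suc i..<n])"
  have M: "?M \<in> carrier_mat (n-i) (n-i)"
    using submat_list_carrier[of C "[i..<n]" "k # [Suc i..<n]"] ik by (simp add: Suc_diff_Suc)
  have "det ?M = 0"
    by (rule det_identical_columns[OF M, of 0 "k - i"], insert ik, auto simp: cons_upt_nth)
  thus ?thesis using ik unfolding ul_lower_def by simp
qed

lemma ul_lower_diag:
  assumes "det (trailing_block C n i) \<noteq> 0" and "i < n"
  shows "ul_lower C n $$ (i,i) = 1"
  using assms upt_conv_Cons[of i n] unfolding ul_lower_def trailing_block_def by simp

lemma det_ul_lower:
  assumes "C \<in> carrier_mat n n" and "\<And>i. i < n \<Longrightarrow> det (trailing_block C n i) \<noteq> 0"
  shows "det (ul_lower C n) = 1"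
  using assms by (intro det_unit_lower_triangular[OF ul_lower_carrier] ul_lower_upper_zero ul_lower_diag)

lemma adj_ul_lower:
  assumes "C \<in> carrier_mat n n" and "\<And>i. i < n \<Longrightarrow> det (trailing_block C n i) \<noteq> 0"
  shows "adj_mat (ul_lower C n) \<in> carrier_mat n n"
    and "ul_lower C n * adj_mat (ul_lower C n) = 1\<^sub>m n"
    and "adj_mat (ul_lower C n) * ul_lower C n = 1\<^sub>m n"
  using adj_mat[OF ul_lower_carrier] det_ul_lower[OF assms] by auto

lemma ul_decomposition:
  assumes C: "C \<in> carrier_mat n n" and d: "\<And>i. i < n \<Longrightarrow> det (trailing_block C n i) \<noteq> 0"
  defines "L \<equiv> ul_lower C n" and "V \<equiv> C * adj_mat (ul_lower C n)"
  shows "V \<in> carrier_mat n n" and "V * L = C"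
    and "\<And>i j. j < i \<Longrightarrow> i < n \<Longrightarrow> V $$ (i,j) = 0" and "\<And>i. i < n \<Longrightarrow> V $$ (i,i) \<noteq> 0"
proof -
  note Li = adj_ul_lower[OF C d, folded L_def]
  have L: "L \<in> carrier_mat n n" unfolding L_def by (rule ul_lower_carrier)
  show V: "V \<in> carrier_mat n n" unfolding V_def L_def[symmetric] using C Li by simp
  show "V * L = C" unfolding V_def L_def[symmetric] using assoc_mult_mat[OF C Li(1) L] Li(3) C by simp
  define G where "G = ul_upper_inv C n"
  have G: "G \<in> carrier_mat n n" unfolding G_def ul_upper_inv_def by simp
  have GC: "G * C = L" unfolding G_def L_def using ul_lower_eq_mult[OF C d] by simp
  have Gu: "\<And>i j. j < i \<Longrightarrow> i < n \<Longrightarrow> G $$ (i,j) = 0" unfolding G_def ul_upper_inv_def by simp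
  have "det G * det C = 1" using det_mult[OF G C] GC det_ul_lower[OF C d] L_def by simp
  hence "det G \<noteq> 0" by auto
  moreover have "det G = prod_list (diag_mat G)"
    by (rule det_upper_triangular[OF _ G], insert G Gu, auto simp: upper_triangular_def)
  ultimately have Gd: "\<And>i. i < n \<Longrightarrow> G $$ (i,i) \<noteq> 0"
    using G by (auto simp: prod_list_zero_iff diag_mat_def)
  have GV: "G * V = 1\<^sub>m n" unfolding V_def L_def[symmetric]
    using assoc_mult_mat[OF G C Li(1), symmetric] GC Li(2) by simp
  show Vu: "\<And>i j. j < i \<Longrightarrow> i < n \<Longrightarrow> V $$ (i,j) = 0"
    by (rule lower_zero_of_upper_triangular_mult[OF G Gu Gd V, of 0], insert GV, auto)
  show "V $$ (i,i) \<noteq> 0" if i: "i < n" for i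
  proof -
    have "(G * V) $$ (i,i) = G $$ (i,i) * V $$ (i,i)"
      by (rule upper_triangular_mult_diag[OF G Gu V i], insert Vu, auto)
    thus ?thesis using GV i by auto
  qed
qed

subsection \<open>Minors of a UL-factored matrix\<close>

lemma det_trailing_block_ul:
  fixes V L :: "complex mat"
  assumes V: "V \<in> carrier_mat n n" and L: "L \<in> carrier_mat n n"
    and Lu: "\<And>i j. i < j \<Longrightarrow> j < n \<Longrightarrow> L $$ (i,j) = 0" and Ld: "\<And>i. i < n \<Longrightarrow> L $$ (i,i) = 1"
    and Vu: "\<And>i j. j < i \<Longrightarrow> i < n \<Longrightarrow> V $$ (i,j) = 0"
  shows "det (trailing_block (V * L) n s) = det (trailing_block V n s)"
proof -
  have prod: "trailing_block (V * L) n s = trailing_block V n s * trailing_block L n s"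
    unfolding trailing_block_def by (rule submat_list_mult[OF V L], insert Vu, auto)
  note block_carriers = trailing_block_carrier[of V n s] trailing_block_carrier[of L n s]
  have "det (trailing_block L n s) = 1"
    using block_carriers(2) Lu Ld by (intro det_unit_lower_triangular) (auto simp: trailing_block_def)
  then show ?thesis unfolding prod det_mult[OF block_carriers] by simp
qed

text \<open>Right multiplication by \<open>L\<close> does not change this minor, and the rows of \<open>Y\<close> it uses below
  the first are multiples of rows of the upper triangular \<open>V\<close>, so the submatrix is block triangular.\<close>
lemma det_first_row_block_ul:
  fixes Y V L :: "complex mat"
  assumes Y: "Y \<in> carrier_mat n n" and V: "V \<in> carrier_mat n n" and L: "L \<in> carrier_mat n n"
    and Lu: "\<And>i j. i < j \<Longrightarrow> j < n \<Longrightarrow> L $$ (i,j) = 0" and Ld: "\<And>i. i < n \<Longrightarrow> L $$ (i,i) = 1"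
    and Vu: "\<And>i j. j < i \<Longrightarrow> i < n \<Longrightarrow> V $$ (i,j) = 0"
    and i: "i < n"
    and YV: "\<And>r k. i < r \<Longrightarrow> r < n \<Longrightarrow> k < n \<Longrightarrow> Y $$ (r,k) = \<sigma> * V $$ (r,k)"
  shows "det (submat_list (Y * L) (0 # [Suc i..<n]) [i..<n])
       = Y $$ (0,i) * \<sigma> ^ (n - Suc i) * det (trailing_block V n (Suc i))"
proof -
  let ?m = "n - Suc i" and ?Y = "submat_list Y (0 # [Suc i..<n]) [i..<n]"
  let ?L = "trailing_block L n i" and ?V = "trailing_block V n (Suc i)"
  let ?A1 = "mat 1 1 (\<lambda>_. Y $$ (0,i))"
  let ?A2 = "mat 1 ?m (\<lambda>(_,b). Y $$ (0, Suc i + b))"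
  have prod: "submat_list (Y * L) (0 # [Suc i..<n]) [i..<n] = ?Y * ?L"
    unfolding trailing_block_def by (rule submat_list_mult[OF Y L], insert Lu i, auto)
  have block_carriers: "?Y \<in> carrier_mat (n-i) (n-i)" "?L \<in> carrier_mat (n-i) (n-i)"
    using submat_list_carrier[of Y "0 # [Suc i..<n]" "[i..<n]"] trailing_block_carrier[of L n i] i
    by (auto simp: Suc_diff_Suc)
  have "det ?L = 1"
    using block_carriers(2) Lu Ld by (intro det_unit_lower_triangular) (auto simp: trailing_block_def)
  have V': "?V \<in> carrier_mat ?m ?m" by (rule trailing_block_carrier)
  have block: "?Y = four_block_mat ?A1 ?A2 (0\<^sub>m ?m 1) (\<sigma> \<cdot>\<^sub>m ?V)"
  proof (rule eq_matI)
    fix a b assume "a < dim_row (four_block_mat ?A1 ?A2 (0\<^sub>m ?m 1) (\<sigma> \<cdot>\<^sub>m ?V))"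
      and "b < dim_col (four_block_mat ?A1 ?A2 (0\<^sub>m ?m 1) (\<sigma> \<cdot>\<^sub>m ?V))"
    hence a: "a < 1 + ?m" "b < 1 + ?m" using V' by auto
    have nn: "1 + ?m = n - i" using i by simp
    show "?Y $$ (a,b) = four_block_mat ?A1 ?A2 (0\<^sub>m ?m 1) (\<sigma> \<cdot>\<^sub>m ?V) $$ (a,b)"
    proof (cases a)
      case 0 thus ?thesis using a nn V' by (cases b) auto
    next
      case (Suc a1)
      hence r: "(0 # [Suc i..<n]) ! a = Suc i + a1" "Suc i + a1 < n" using a by auto
      show ?thesis
      proof (cases b)
        case 0 thus ?thesis using a nn r Suc V' YV[of "Suc i + a1" i] Vu[of i "Suc i + a1"] by auto
      next
        case (Suc b1) thus ?thesis
          using a nn r \<open>a = Suc a1\<close> V' YV[of "Suc i + a1" "Suc i + b1"] by (auto simp: trailing_block_def)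
      qed
    qed
  qed (insert i V', auto)
  have "det ?Y = det ?A1 * det (\<sigma> \<cdot>\<^sub>m ?V)"
    unfolding block by (rule det_four_block_mat_lower_left_zero_col, insert V', auto)
  also have "det ?A1 = Y $$ (0,i)" by (subst det_single, auto)
  also have "det (\<sigma> \<cdot>\<^sub>m ?V) = \<sigma> ^ ?m * det ?V" using det_smult V' by auto
  finally show ?thesis
    unfolding prod det_mult[OF block_carriers] \<open>det ?L = 1\<close> by simp
qed

subsection \<open>The matrices \<open>E\<^sub>1\<close>, \<open>E\<^sub>2\<^sub>n\<close> and the residue matrices\<close>

lemma index_mult_E2n:
  assumes A: "A \<in> carrier_mat n n" and i: "i < n" and j: "j < n"
  shows "(A * E2n n) $$ (i,j) = (if j = 0 then 0 else A $$ (i,j))"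
proof -
  have E: "E2n n \<in> carrier_mat n n" unfolding E2n_def by simp
  have "(A * E2n n) $$ (i,j) = (\<Sum>k<n. A $$ (i,k) * E2n n $$ (k,j))"
    by (rule index_mult_mat_sum[OF A E i j])
  also have "\<dots> = A $$ (i,j) * E2n n $$ (j,j)"
    by (rule sum_eq_single_nonzero, insert j, auto simp: E2n_def)
  finally show ?thesis using j by (simp add: E2n_def)
qed

lemma mtrace_E1_mult:
  assumes X: "X \<in> carrier_mat n n" and n: "0 < n"
  shows "mtrace (E1 n * X) = X $$ (0,0)"
proof -
  have E: "E1 n \<in> carrier_mat n n" unfolding E1_def by simp
  have row: "(E1 n * X) $$ (i,j) = (if i = 0 then X $$ (0,j) else 0)" if "i < n" "j < n" for i j
  proof -
    have "(E1 n * X) $$ (i,j) = (\<Sum>k<n. E1 n $$ (i,k) * X $$ (k,j))"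
      by (rule index_mult_mat_sum[OF E X that])
    also have "\<dots> = E1 n $$ (i,i) * X $$ (i,j)"
      by (rule sum_eq_single_nonzero, insert that, auto simp: E1_def)
    finally show ?thesis using that by (simp add: E1_def)
  qed
  have "mtrace (E1 n * X) = (\<Sum>i<n. (E1 n * X) $$ (i,i))" unfolding mtrace_def using E X by simp
  also have "\<dots> = (E1 n * X) $$ (0,0)" by (rule sum_eq_single_nonzero, insert n row, auto)
  finally show ?thesis using row n by simp
qed

lemma mtrace_E1_mult_mult:
  assumes "A \<in> carrier_mat n n" "B \<in> carrier_mat n n" "0 < n"
  shows "mtrace (E1 n * A * B) = (A * B) $$ (0,0)"
proof -
  have "E1 n * A * B = E1 n * (A * B)"
    using assms by (intro assoc_mult_mat) (auto simp: E1_def)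
  thus ?thesis using mtrace_E1_mult[of "A * B" n] assms by simp
qed

lemma index_mult3_mat_first:
  assumes A: "A \<in> carrier_mat n n" and B: "B \<in> carrier_mat n n" and C: "C \<in> carrier_mat n n"
    and n: "0 < n"
  shows "(A * B * C) $$ (0,0) = (\<Sum>i<n. \<Sum>j<n. A $$ (0,i) * B $$ (i,j) * C $$ (j,0))"
proof -
  have "(A * B * C) $$ (0,0) = (\<Sum>j<n. (A * B) $$ (0,j) * C $$ (j,0))"
    using A B C n by (intro index_mult_mat_sum[of _ n n]) auto
  also have "\<dots> = (\<Sum>j<n. \<Sum>i<n. A $$ (0,i) * B $$ (i,j) * C $$ (j,0))"
    by (rule sum.cong[OF refl], subst index_mult_mat_sum[OF A B n], auto simp: sum_distrib_right)
  finally show ?thesis by (subst sum.swap)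
qed

lemma Atilde_block_entries:
  assumes B: "B \<in> carrier_mat n n" and C: "C \<in> carrier_mat n n"
    and i: "i < 2*n" and j: "j < 2*n"
  shows "Atilde n \<theta> B C $$ (i,j) =
    (if i < n then (if j < n then (\<theta> \<cdot>\<^sub>m 1\<^sub>m n - C * B) $$ (i,j) else C $$ (i, j - n))
     else (if j < n then (B * (\<theta> \<cdot>\<^sub>m 1\<^sub>m n - C * B)) $$ (i-n,j) else (B * C) $$ (i - n, j - n)))"
proof -
  let ?X = "\<theta> \<cdot>\<^sub>m 1\<^sub>m n - C * B"
  have X: "?X \<in> carrier_mat n n" using B C by auto
  have "Atilde n \<theta> B C = four_block_mat (1\<^sub>m n) (0\<^sub>m n 0) B (0\<^sub>m n 0) * four_block_mat ?X C (0\<^sub>m 0 n) (0\<^sub>m 0 n)"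
    unfolding Atilde_def hcat_def append_rows_def using B C X by simp
  also have "\<dots> = four_block_mat (1\<^sub>m n * ?X + 0\<^sub>m n 0 * 0\<^sub>m 0 n) (1\<^sub>m n * C + 0\<^sub>m n 0 * 0\<^sub>m 0 n)
       (B * ?X + 0\<^sub>m n 0 * 0\<^sub>m 0 n) (B * C + 0\<^sub>m n 0 * 0\<^sub>m 0 n)"
    by (rule mult_four_block_mat, insert B C X, auto)
  finally show ?thesis using i j B C X by (auto simp: mult_2)
qed

lemma Atilde_carrier:
  assumes "B \<in> carrier_mat n n" and "C \<in> carrier_mat n n"
  shows "Atilde n \<theta> B C \<in> carrier_mat (2*n) (2*n)"
proof -
  have "1\<^sub>m n @\<^sub>r B \<in> carrier_mat (n+n) n" using assms by auto
  moreover have "hcat (\<theta> \<cdot>\<^sub>m 1\<^sub>m n - C * B) C \<in> carrier_mat (n+0) (n+n)"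
    unfolding hcat_def using assms by (intro four_block_carrier_mat) auto
  ultimately show ?thesis unfolding Atilde_def by (simp add: mult_2)
qed

lemma residue_sum_blocks:
  fixes \<kappa> :: "nat \<Rightarrow> complex" and Bt Ct B1 C1 A0 Ainf :: "complex mat"
  assumes dims: "Bt \<in> carrier_mat n n" "Ct \<in> carrier_mat n n"
              "B1 \<in> carrier_mat n n" "C1 \<in> carrier_mat n n"
    and A0: "A0 \<in> carrier_mat (2*n) (2*n)"
            "\<And>i j. i < 2*n \<Longrightarrow> j < 2*n \<Longrightarrow> i \<noteq> 0 \<Longrightarrow> A0 $$ (i,j) = 0"
    and Ainf: "Ainf \<in> carrier_mat (2*n) (2*n)"
            "\<And>i. i < 2*n \<Longrightarrow> Ainf $$ (i,i) = \<kappa> (i+1)"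
            "\<And>i j. i < 2*n \<Longrightarrow> j < 2*n \<Longrightarrow> i \<noteq> j \<Longrightarrow> j \<noteq> 0 \<Longrightarrow> Ainf $$ (i,j) = 0"
    and sum0: "Atilde n \<theta>t Bt Ct + Atilde n \<theta>1 B1 C1 + A0 + Ainf = 0\<^sub>m (2*n) (2*n)"
  shows "\<And>i j. 0 < i \<Longrightarrow> i < n \<Longrightarrow> j < n \<Longrightarrow> C1 $$ (i,j) = - Ct $$ (i,j)"
    and "\<And>i j. i < n \<Longrightarrow> j < n \<Longrightarrow> (Bt * Ct + B1 * C1) $$ (i,j) = (if i = j then - \<kappa> (n+i+1) else 0)"
    and "\<And>i j. 0 < i \<Longrightarrow> i < n \<Longrightarrow> 0 < j \<Longrightarrow> j < n \<Longrightarrow>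
           (Ct * Bt + C1 * B1) $$ (i,j) = (if i = j then \<theta>t + \<theta>1 + \<kappa> (i+1) else 0)"
proof -
  have At: "Atilde n \<theta>t Bt Ct \<in> carrier_mat (2*n) (2*n)" and A1: "Atilde n \<theta>1 B1 C1 \<in> carrier_mat (2*n) (2*n)"
    using Atilde_carrier dims by auto
  have E: "Atilde n \<theta>t Bt Ct $$ (i,j) + Atilde n \<theta>1 B1 C1 $$ (i,j) + A0 $$ (i,j) + Ainf $$ (i,j) = 0"
    if "i < 2*n" "j < 2*n" for i j
  proof -
    have "(Atilde n \<theta>t Bt Ct + Atilde n \<theta>1 B1 C1 + A0 + Ainf) $$ (i,j) = 0"
      unfolding sum0 using that by simp
    thus ?thesis using that At A1 A0(1) Ainf(1) by (simp add: add.assoc)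
  qed
  note entries = Atilde_block_entries[OF dims(1,2)] Atilde_block_entries[OF dims(3,4)]
  show "C1 $$ (i,j) = - Ct $$ (i,j)" if "0 < i" "i < n" "j < n" for i j
    using E[of i "n+j"] that A0(2)[of i "n+j"] Ainf(3)[of i "n+j"]
    by (simp add: entries add_eq_0_iff)
  show "(Bt * Ct + B1 * C1) $$ (i,j) = (if i = j then - \<kappa> (n+i+1) else 0)" if "i < n" "j < n" for i j
    using E[of "n+i" "n+j"] that A0(2)[of "n+i" "n+j"] Ainf(3)[of "n+i" "n+j"] Ainf(2)[of "n+i"] dims
    by (auto simp add: entries add_eq_0_iff algebra_simps;
        metis add.commute add.left_commute add_eq_0_iff neg_eq_iff_add_eq_0 add.assoc)
  show "(Ct * Bt + C1 * B1) $$ (i,j) = (if i = j then \<theta>t + \<theta>1 + \<kappa> (i+1) else 0)"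
    if "0 < i" "i < n" "0 < j" "j < n" for i j
    using E[of i j] that A0(2)[of i j] Ainf(3)[of i j] Ainf(2)[of i] dims
    by (auto simp add: entries add_eq_0_iff algebra_simps;
        metis add.commute add.left_commute add_eq_0_iff neg_eq_iff_add_eq_0 add.assoc)
qed

subsection \<open>The canonical coordinates\<close>

locale residue_coordinates =
  fixes n :: nat and \<theta>t \<theta>1 t :: complex and \<kappa> :: "nat \<Rightarrow> complex"
    and Bt Ct B1 C1 :: "complex mat"
  assumes n_pos: "0 < n"
    and Bt_carrier: "Bt \<in> carrier_mat n n" and Ct_carrier: "Ct \<in> carrier_mat n n"
    and B1_carrier: "B1 \<in> carrier_mat n n" and C1_carrier: "C1 \<in> carrier_mat n n"
    and t_nonzero: "t \<noteq> 0"
    and C1_rows: "\<And>i j. 0 < i \<Longrightarrow> i < n \<Longrightarrow> j < n \<Longrightarrow> C1 $$ (i,j) = - Ct $$ (i,j)"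
    and BC_sum: "\<And>i j. i < n \<Longrightarrow> j < n \<Longrightarrow>
      (Bt * Ct + B1 * C1) $$ (i,j) = (if i = j then - \<kappa> (n+i+1) else 0)"
    and CB_sum: "\<And>i j. 0 < i \<Longrightarrow> i < n \<Longrightarrow> 0 < j \<Longrightarrow> j < n \<Longrightarrow>
      (Ct * Bt + C1 * B1) $$ (i,j) = (if i = j then \<theta>t + \<theta>1 + \<kappa> (i+1) else 0)"
    and minor_nonzero:
      "\<And>i. 1 \<le> i \<Longrightarrow> i \<le> n \<Longrightarrow> minor Ct [i+1..<n+1] [i+1..<n+1] \<noteq> 0"
      "\<And>i. 1 \<le> i \<Longrightarrow> i \<le> n \<Longrightarrow> minor Ct [i..<n+1] [i..<n+1] \<noteq> 0"
      "\<And>i. 1 \<le> i \<Longrightarrow> i \<le> n \<Longrightarrow> minor C1 (1 # [i+1..<n+1]) [i..<n+1] \<noteq> 0"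
begin

lemmas BC_carriers = Bt_carrier Ct_carrier B1_carrier C1_carrier

definition L where "L = ul_lower Ct n"
definition V where "V = Ct * adj_mat L"
definition W where "W = C1 * adj_mat L"
definition Q where "Q = L * Bt"
definition R where "R = L * B1"
definition Z where "Z = L * (Bt - B1) * E2n n * V"
definition T where "T = Q * V + R * W"
definition u where "u j = V $$ (0,j)"
definition w where "w j = W $$ (0,j)"
definition p where "p j = Q $$ (j,0)"
definition y where "y j = R $$ (j,0)"
definition D where "D i = (if i = 0 then 0 else \<theta>t + \<theta>1 + \<kappa> (i+1))"
definition beta where "beta = (\<lambda>i. if i = 1 then - \<kappa> (n+1) else - \<theta>t - \<theta>1 - \<kappa> i - \<kappa> (n+i))"

abbreviation "\<mu> \<equiv> mu n t Bt Ct C1"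
abbreviation "lm \<equiv> lam n t Ct C1"

lemma trailing_block_nonzero: "i < n \<Longrightarrow> det (trailing_block Ct n i) \<noteq> 0"
  using minor_nonzero(2)[of "i+1"]
  unfolding minor_eq_det_submat_list list.map map_pred_upt map_pred_upt_Suc
  by (simp add: trailing_block_def)

lemma L_carrier: "L \<in> carrier_mat n n"
  and L_upper_zero: "\<And>i j. i < j \<Longrightarrow> j < n \<Longrightarrow> L $$ (i,j) = 0"
  and L_diag: "\<And>i. i < n \<Longrightarrow> L $$ (i,i) = 1"
  and adj_L: "adj_mat L \<in> carrier_mat n n" "adj_mat L * L = 1\<^sub>m n"
  unfolding L_def
  using ul_lower_carrier ul_lower_upper_zero[OF Ct_carrier] ul_lower_diag[OF trailing_block_nonzero]
    adj_ul_lower[OF Ct_carrier trailing_block_nonzero] by auto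

lemma V_carrier: "V \<in> carrier_mat n n"
  and V_mult_L: "V * L = Ct"
  and V_lower_zero: "\<And>i j. j < i \<Longrightarrow> i < n \<Longrightarrow> V $$ (i,j) = 0"
  and V_diag: "\<And>i. i < n \<Longrightarrow> V $$ (i,i) \<noteq> 0"
  using ul_decomposition[OF Ct_carrier trailing_block_nonzero] unfolding V_def L_def by auto

lemma W_carrier: "W \<in> carrier_mat n n" and Q_carrier: "Q \<in> carrier_mat n n"
  and R_carrier: "R \<in> carrier_mat n n" and Z_carrier: "Z \<in> carrier_mat n n"
  and T_carrier: "T \<in> carrier_mat n n" and E1_carrier: "E1 n \<in> carrier_mat n n"
  and E2n_carrier: "E2n n \<in> carrier_mat n n" and Bt_minus_B1_carrier: "Bt - B1 \<in> carrier_mat n n"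
  using BC_carriers L_carrier V_carrier adj_L
  by (auto simp: W_def Q_def R_def Z_def T_def E1_def E2n_def)

lemmas derived_carriers = W_carrier Q_carrier R_carrier Z_carrier T_carrier E1_carrier E2n_carrier Bt_minus_B1_carrier

lemma W_mult_L: "W * L = C1"
  unfolding W_def using assoc_mult_mat[OF C1_carrier adj_L(1) L_carrier] adj_L BC_carriers by simp

text \<open>Right-associated forms for rewriting; the reversed equations would loop, since \<open>L\<close> is defined
  from \<open>Ct\<close>.\<close>
lemma V_mult_L_mult: "A \<in> carrier_mat n n \<Longrightarrow> V * (L * A) = Ct * A"
  and W_mult_L_mult: "A \<in> carrier_mat n n \<Longrightarrow> W * (L * A) = C1 * A"
  using assoc_mult_mat[OF V_carrier L_carrier] assoc_mult_mat[OF W_carrier L_carrier] V_mult_L W_mult_L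
  by metis+

lemma W_rows:
  assumes "0 < r" "r < n" "k < n"
  shows "W $$ (r,k) = - V $$ (r,k)"
proof -
  have "W $$ (r,k) = (\<Sum>m<n. C1 $$ (r,m) * adj_mat L $$ (m,k))"
    unfolding W_def by (rule index_mult_mat_sum[OF C1_carrier adj_L(1) assms(2,3)])
  also have "\<dots> = - (\<Sum>m<n. Ct $$ (r,m) * adj_mat L $$ (m,k))"
    using C1_rows assms by (simp add: sum_negf)
  also have "(\<Sum>m<n. Ct $$ (r,m) * adj_mat L $$ (m,k)) = V $$ (r,k)"
    unfolding V_def by (rule index_mult_mat_sum[OF Ct_carrier adj_L(1) assms(2,3), symmetric])
  finally show ?thesis .
qed

lemma Ct_diff_E2n_rows:
  assumes "0 < i" "i < n" "k < n"
  shows "(Ct * (Bt - B1) * E2n n) $$ (i,k) = (if k = i then D i else 0)"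
proof -
  have "(Ct * (Bt - B1)) $$ (i,k) = (Ct * Bt) $$ (i,k) - (Ct * B1) $$ (i,k)"
    using mult_minus_distrib_mat[OF Ct_carrier Bt_carrier B1_carrier] BC_carriers assms by simp
  also have "(Ct * B1) $$ (i,k) = - (C1 * B1) $$ (i,k)"
    using index_mult_mat_sum[OF Ct_carrier B1_carrier assms(2,3)] index_mult_mat_sum[OF C1_carrier B1_carrier assms(2,3)]
      C1_rows assms by (simp add: sum_negf)
  finally have "(Ct * (Bt - B1)) $$ (i,k) = (Ct * Bt + C1 * B1) $$ (i,k)"
    using BC_carriers assms by simp
  moreover have "Ct * (Bt - B1) \<in> carrier_mat n n" using Ct_carrier Bt_minus_B1_carrier by simp
  ultimately show ?thesis using CB_sum[of i k] assms index_mult_E2n[of "Ct * (Bt - B1)" n i k]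
    by (auto simp: D_def)
qed

lemma V_mult_Z_rows:
  assumes "0 < i" "i < n" "j < n"
  shows "(V * Z) $$ (i,j) = D i * V $$ (i,j)"
proof -
  let ?M = "Ct * (Bt - B1) * E2n n"
  have M: "?M \<in> carrier_mat n n" using BC_carriers derived_carriers by simp
  have "V * Z = V * (L * (Bt - B1) * E2n n) * V"
    unfolding Z_def using V_carrier L_carrier derived_carriers by (intro assoc_mult_mat[symmetric]) auto
  also have "V * (L * (Bt - B1) * E2n n) = V * (L * (Bt - B1)) * E2n n"
    using V_carrier L_carrier derived_carriers by (intro assoc_mult_mat[symmetric]) auto
  also have "V * (L * (Bt - B1)) = Ct * (Bt - B1)"
    using assoc_mult_mat[OF V_carrier L_carrier Bt_minus_B1_carrier] V_mult_L by simp
  finally have "V * Z = ?M * V" .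
  hence "(V * Z) $$ (i,j) = (\<Sum>k<n. ?M $$ (i,k) * V $$ (k,j))"
    using index_mult_mat_sum[OF M V_carrier assms(2,3)] by simp
  also have "\<dots> = ?M $$ (i,i) * V $$ (i,j)"
    by (rule sum_eq_single_nonzero, insert assms Ct_diff_E2n_rows, auto)
  finally show ?thesis using Ct_diff_E2n_rows assms by simp
qed

lemma Z_lower_zero:
  assumes "i < n" "j < i"
  shows "Z $$ (i,j) = 0"
proof (rule lower_zero_of_upper_triangular_mult[OF V_carrier V_lower_zero V_diag Z_carrier, of 1])
  fix i j :: nat assume "1 \<le> i" "i < n" "j < i"
  thus "(V * Z) $$ (i,j) = 0" using V_mult_Z_rows V_lower_zero by simp
qed (use assms in auto)

lemma Z_diag: "i < n \<Longrightarrow> Z $$ (i,i) = D i"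
proof (cases "i = 0")
  case True
  let ?M = "L * (Bt - B1) * E2n n"
  have M: "?M \<in> carrier_mat n n" using L_carrier derived_carriers by simp
  have "Z $$ (0,0) = (\<Sum>k<n. ?M $$ (0,k) * V $$ (k,0))"
    unfolding Z_def by (rule index_mult_mat_sum[OF M V_carrier n_pos n_pos])
  also have "\<dots> = ?M $$ (0,0) * V $$ (0,0)"
    by (rule sum_eq_single_nonzero, insert V_lower_zero n_pos, auto)
  also have "?M $$ (0,0) = 0"
    using index_mult_E2n[of "L * (Bt - B1)" n 0 0] L_carrier derived_carriers n_pos by simp
  finally show ?thesis using True by (simp add: D_def)
next
  case False
  assume i: "i < n"
  have "(V * Z) $$ (i,i) = V $$ (i,i) * Z $$ (i,i)"
    by (rule upper_triangular_mult_diag[OF V_carrier V_lower_zero Z_carrier i], insert Z_lower_zero i, auto)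
  thus ?thesis using V_mult_Z_rows[of i i] False i V_diag[OF i] by simp
qed

text \<open>\<open>Z\<close> and \<open>T\<close> differ by the rank-two matrix coming from the first column of \<open>E\<^sub>2\<^sub>n\<close>, which is
  missing in \<open>Z\<close>, and the first row of \<open>W\<close>, which is not \<open>-V\<close>.\<close>
lemma T_eq_Z_plus:
  assumes ij: "i < n" "j < n"
  shows "T $$ (i,j) = Z $$ (i,j) + p i * u j + y i * w j"
proof -
  let ?M = "L * (Bt - B1) * E2n n"
  have LB: "L * (Bt - B1) \<in> carrier_mat n n" using L_carrier derived_carriers by simp
  have M: "?M \<in> carrier_mat n n" using LB derived_carriers by simp
  have M_entry: "?M $$ (i,k) = (if k = 0 then 0 else Q $$ (i,k) - R $$ (i,k))" if "k < n" for k
    using index_mult_E2n[OF LB ij(1) that] mult_minus_distrib_mat[OF L_carrier Bt_carrier B1_carrier]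
      carrier_matD[OF L_carrier] carrier_matD[OF B1_carrier] ij that unfolding Q_def R_def by simp
  have "Z $$ (i,j) = (\<Sum>k<n. ?M $$ (i,k) * V $$ (k,j))"
    unfolding Z_def by (rule index_mult_mat_sum[OF M V_carrier ij])
  also have "\<dots> = ?M $$ (i,0) * V $$ (0,j) + (\<Sum>k\<in>{1..<n}. ?M $$ (i,k) * V $$ (k,j))"
    by (rule sum_lessThan_split_first[OF n_pos])
  also have "(\<Sum>k\<in>{1..<n}. ?M $$ (i,k) * V $$ (k,j))
      = (\<Sum>k\<in>{1..<n}. Q $$ (i,k) * V $$ (k,j) - R $$ (i,k) * V $$ (k,j))"
    by (rule sum.cong, insert M_entry, auto simp: algebra_simps)
  finally have Z: "Z $$ (i,j) = (\<Sum>k\<in>{1..<n}. Q $$ (i,k) * V $$ (k,j)) - (\<Sum>k\<in>{1..<n}. R $$ (i,k) * V $$ (k,j))"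
    using M_entry n_pos by (simp add: sum_subtractf)
  have "T $$ (i,j) = (\<Sum>k<n. Q $$ (i,k) * V $$ (k,j)) + (\<Sum>k<n. R $$ (i,k) * W $$ (k,j))"
    unfolding T_def using index_mult_mat_sum[OF Q_carrier V_carrier ij]
      index_mult_mat_sum[OF R_carrier W_carrier ij] derived_carriers V_carrier ij by simp
  also have "\<dots> = Q $$ (i,0) * V $$ (0,j) + (\<Sum>k\<in>{1..<n}. Q $$ (i,k) * V $$ (k,j))
      + (R $$ (i,0) * W $$ (0,j) + (\<Sum>k\<in>{1..<n}. R $$ (i,k) * W $$ (k,j)))"
    by (simp add: sum_lessThan_split_first[OF n_pos])
  also have "(\<Sum>k\<in>{1..<n}. R $$ (i,k) * W $$ (k,j)) = - (\<Sum>k\<in>{1..<n}. R $$ (i,k) * V $$ (k,j))"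
    unfolding sum_negf[symmetric] by (rule sum.cong, insert W_rows ij, auto)
  finally show ?thesis unfolding Z p_def u_def y_def w_def by simp
qed

lemma T_mult_L: "T * L = L * (Bt * Ct + B1 * C1)"
proof -
  have "T * L = Q * V * L + R * W * L" unfolding T_def
    using add_mult_distrib_mat[of "Q * V" n n "R * W" L n] derived_carriers V_carrier L_carrier by simp
  also have "Q * V * L = L * (Bt * Ct)"
  proof -
    have "Q * V * L = Q * Ct" using assoc_mult_mat[OF Q_carrier V_carrier L_carrier] V_mult_L by simp
    thus ?thesis unfolding Q_def using assoc_mult_mat[OF L_carrier Bt_carrier Ct_carrier] by simp
  qed
  also have "R * W * L = L * (B1 * C1)"
  proof -
    have "R * W * L = R * C1" using assoc_mult_mat[OF R_carrier W_carrier L_carrier] W_mult_L by simp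
    thus ?thesis unfolding R_def using assoc_mult_mat[OF L_carrier B1_carrier C1_carrier] by simp
  qed
  finally show ?thesis
    using mult_add_distrib_mat[of L n n "Bt * Ct" n "B1 * C1"] L_carrier BC_carriers by simp
qed

lemma T_mult_L_entries:
  assumes "i < n" "j < n"
  shows "(T * L) $$ (i,j) = - L $$ (i,j) * \<kappa> (n+j+1)"
proof -
  have K: "Bt * Ct + B1 * C1 \<in> carrier_mat n n" using BC_carriers by simp
  have "(T * L) $$ (i,j) = (\<Sum>k<n. L $$ (i,k) * (Bt * Ct + B1 * C1) $$ (k,j))"
    unfolding T_mult_L by (rule index_mult_mat_sum[OF L_carrier K assms])
  also have "\<dots> = L $$ (i,j) * (Bt * Ct + B1 * C1) $$ (j,j)"
    by (rule sum_eq_single_nonzero, insert BC_sum assms, auto)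
  finally show ?thesis using BC_sum[of j j] assms by simp
qed

text \<open>\<open>T L = L K\<close> with \<open>K\<close> diagonal: transposing, \<open>L\<^sup>T\<close> is upper triangular with unit diagonal.\<close>
lemma
  shows T_upper_zero: "\<And>i j. i < j \<Longrightarrow> j < n \<Longrightarrow> T $$ (i,j) = 0"
    and T_diag: "\<And>i. i < n \<Longrightarrow> T $$ (i,i) = - \<kappa> (n+i+1)"
proof -
  let ?Lt = "transpose_mat L" and ?Tt = "transpose_mat T"
  have Lt: "?Lt \<in> carrier_mat n n" and Tt: "?Tt \<in> carrier_mat n n" using L_carrier derived_carriers by auto
  have LtTt: "?Lt * ?Tt = transpose_mat (T * L)" using transpose_mult[OF T_carrier L_carrier] by simp
  have Ltu: "\<And>i j. j < i \<Longrightarrow> i < n \<Longrightarrow> ?Lt $$ (i,j) = 0" using L_upper_zero L_carrier by auto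
  have Ltd: "\<And>i. 0 \<le> i \<Longrightarrow> i < n \<Longrightarrow> ?Lt $$ (i,i) \<noteq> 0" using L_diag L_carrier by auto
  show Tu: "T $$ (i,j) = 0" if "i < j" "j < n" for i j
  proof -
    have "?Tt $$ (j,i) = 0"
      by (rule lower_zero_of_upper_triangular_mult[OF Lt Ltu Ltd Tt, of 0],
          insert that T_mult_L_entries L_upper_zero L_carrier derived_carriers, auto simp: LtTt)
    thus ?thesis using that derived_carriers by auto
  qed
  show "T $$ (i,i) = - \<kappa> (n+i+1)" if "i < n" for i
  proof -
    have "(?Lt * ?Tt) $$ (i,i) = ?Lt $$ (i,i) * ?Tt $$ (i,i)"
      by (rule upper_triangular_mult_diag[OF Lt Ltu Tt that], insert Tu derived_carriers that, auto)
    thus ?thesis unfolding LtTt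
      using T_mult_L_entries[OF that that] L_diag[OF that] that L_carrier derived_carriers by auto
  qed
qed

lemma Z_entries:
  "i < n \<Longrightarrow> j < n \<Longrightarrow> Z $$ (i,j) = (if j < i then 0 else if j = i then D i else - p i * u j - y i * w j)"
  using Z_lower_zero Z_diag T_eq_Z_plus T_upper_zero by (auto simp: algebra_simps eq_neg_iff_add_eq_0)

lemma rank_two_part_diag: "i < n \<Longrightarrow> u i * p i + w i * y i = - \<kappa> (n+i+1) - D i"
proof -
  assume i: "i < n"
  have "- \<kappa> (n+i+1) = D i + (u i * p i + w i * y i)"
    using T_eq_Z_plus[OF i i] T_diag[OF i] Z_diag[OF i] by simp
  thus ?thesis by simp
qed

lemma beta_Suc: "i < n \<Longrightarrow> beta (Suc i) = u i * p i + w i * y i"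
  unfolding rank_two_part_diag by (simp add: beta_def D_def)

lemma D_eq: "i < n \<Longrightarrow> - beta (Suc i) - \<kappa> (n + Suc i) = D i"
  unfolding beta_Suc rank_two_part_diag by simp

lemma minor_Ct_trailing:
  "i < n \<Longrightarrow> minor Ct [Suc i+1..<n+1] [Suc i+1..<n+1] = det (trailing_block V n (Suc i))"
  using det_trailing_block_ul[OF V_carrier L_carrier L_upper_zero L_diag V_lower_zero, of "Suc i"]
  unfolding minor_eq_det_submat_list list.map map_pred_upt map_pred_upt_Suc
  by (simp add: V_mult_L trailing_block_def)

lemma minor_C1_first_row:
  "i < n \<Longrightarrow> minor C1 (1 # [Suc i+1..<n+1]) [Suc i..<n+1]
    = w i * (-1) ^ (n - Suc i) * det (trailing_block V n (Suc i))"
  using det_first_row_block_ul[OF W_carrier V_carrier L_carrier L_upper_zero L_diag V_lower_zero, of i "-1"]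
    W_rows
  unfolding minor_eq_det_submat_list list.map map_pred_upt map_pred_upt_Suc
  by (simp add: W_mult_L w_def)

lemma minor_Ct_first_row:
  "i < n \<Longrightarrow> minor Ct (1 # [Suc i+1..<n+1]) [Suc i..<n+1] = u i * det (trailing_block V n (Suc i))"
  using det_first_row_block_ul[OF V_carrier V_carrier L_carrier L_upper_zero L_diag V_lower_zero, of i 1]
  unfolding minor_eq_det_submat_list list.map map_pred_upt map_pred_upt_Suc
  by (simp add: V_mult_L u_def)

lemma trailing_block_V_nonzero: "i < n \<Longrightarrow> det (trailing_block V n (Suc i)) \<noteq> 0"
  using minor_nonzero(1)[of "Suc i"] minor_Ct_trailing by simp

lemma w_nonzero: "i < n \<Longrightarrow> w i \<noteq> 0"
  using minor_nonzero(3)[of "Suc i"] minor_C1_first_row by auto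

lemma minor_ratio_eq_L:
  assumes "i < n" "1 \<le> k" "k \<le> Suc i"
  shows "minor Ct [Suc i..<n+1] (k # [Suc i+1..<n+1]) / minor Ct [Suc i..<n+1] [Suc i..<n+1] = L $$ (i, k - 1)"
  using assms unfolding L_def ul_lower_def
  unfolding minor_eq_det_submat_list list.map map_pred_upt map_pred_upt_Suc
  by (simp add: trailing_block_def)

lemma mu_Suc: "i < n \<Longrightarrow> t * \<mu> (Suc i) = w i * p i"
proof -
  assume i: "i < n"
  let ?m = "n - Suc i" and ?\<delta> = "det (trailing_block V n (Suc i))"
  have "(\<Sum>k=1..Suc i. minor Ct [Suc i..<n+1] (k # [Suc i+1..<n+1]) / minor Ct [Suc i..<n+1] [Suc i..<n+1]
      * Bt $$ (k-1, 0)) = (\<Sum>k=1..Suc i. L $$ (i, k-1) * Bt $$ (k-1, 0))"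
    by (rule sum.cong, insert minor_ratio_eq_L[OF i], auto)
  also have "\<dots> = (\<Sum>k<Suc i. L $$ (i, k) * Bt $$ (k, 0))"
    by (simp add: sum.atLeast1_atMost_eq)
  also have "\<dots> = (\<Sum>k<n. L $$ (i, k) * Bt $$ (k, 0))"
    by (rule sum.mono_neutral_left, insert i L_upper_zero, auto)
  also have "\<dots> = p i" unfolding p_def Q_def using index_mult_mat_sum[OF L_carrier Bt_carrier i n_pos] by simp
  finally have "\<mu> (Suc i) = (-1) ^ ?m * inverse t * (w i * (-1) ^ ?m * ?\<delta>) / ?\<delta> * p i"
    unfolding mu_def minor_C1_first_row[OF i] minor_Ct_trailing[OF i] by simp
  also have "\<dots> = w i * p i / t"
    using trailing_block_V_nonzero[OF i] by (simp add: field_simps flip: power_mult_distrib)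
  finally show ?thesis using t_nonzero by simp
qed

lemma lam_Suc: "i < n \<Longrightarrow> lm (Suc i) * w i = - t * u i"
proof -
  assume i: "i < n"
  let ?m = "n - Suc i" and ?\<delta> = "det (trailing_block V n (Suc i))"
  have "lm (Suc i) = (-1)^(?m+1) * t * (u i * ?\<delta>) / (w i * (-1) ^ ?m * ?\<delta>)"
    unfolding lam_def minor_C1_first_row[OF i] minor_Ct_first_row[OF i] by simp
  also have "\<dots> = - t * u i / w i"
    using trailing_block_V_nonzero[OF i] w_nonzero[OF i] by (simp add: field_simps flip: power_mult_distrib)
  finally show ?thesis using w_nonzero[OF i] by simp
qed

lemma lam_mu: "i < n \<Longrightarrow> lm (Suc i) * \<mu> (Suc i) = - (u i * p i)"
proof -
  assume i: "i < n"
  have "(t * w i) * (lm (Suc i) * \<mu> (Suc i)) = (lm (Suc i) * w i) * (t * \<mu> (Suc i))"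
    by (simp add: ac_simps)
  also have "\<dots> = (t * w i) * - (u i * p i)"
    unfolding mu_Suc[OF i] lam_Suc[OF i] by (simp add: ac_simps)
  finally have "(t * w i) * (lm (Suc i) * \<mu> (Suc i)) = (t * w i) * - (u i * p i)" .
  thus ?thesis using t_nonzero w_nonzero[OF i] by (metis mult_eq_0_iff mult_left_cancel)
qed

lemma lam_mu_beta: "i < n \<Longrightarrow> lm (Suc i) * \<mu> (Suc i) + beta (Suc i) = w i * y i"
  using lam_mu beta_Suc by simp

lemma lam_lam_mu_beta: "i < n \<Longrightarrow> - (1/t) * (lm (Suc i) * (lm (Suc i) * \<mu> (Suc i) + beta (Suc i))) = u i * y i"
proof -
  assume i: "i < n"
  have "lm (Suc i) * (w i * y i) = - t * u i * y i" using lam_Suc[OF i] by (metis mult.assoc)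
  thus ?thesis unfolding lam_mu_beta[OF i] using t_nonzero by (simp add: field_simps)
qed

lemma trace_Ct_Bt: "mtrace (E1 n * Ct * Bt) = - (\<Sum>i=1..n. lm i * \<mu> i)"
proof -
  have "Ct * Bt = V * Q"
    unfolding Q_def using assoc_mult_mat[OF V_carrier L_carrier Bt_carrier] V_mult_L by simp
  hence "mtrace (E1 n * Ct * Bt) = (\<Sum>k<n. u k * p k)"
    using mtrace_E1_mult_mult[OF Ct_carrier Bt_carrier n_pos] index_mult_mat_sum[OF V_carrier Q_carrier n_pos n_pos]
    by (simp add: u_def p_def)
  also have "\<dots> = (\<Sum>i<n. - (lm (Suc i) * \<mu> (Suc i)))"
    by (rule sum.cong[OF refl]) (simp add: lam_mu)
  finally show ?thesis unfolding sum_atLeast1_atMost_shift by (simp add: sum_negf)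
qed

lemma trace_C1_Bt: "mtrace (E1 n * C1 * Bt) = t * (\<Sum>i=1..n. \<mu> i)"
proof -
  have "C1 * Bt = W * Q"
    unfolding Q_def using assoc_mult_mat[OF W_carrier L_carrier Bt_carrier] W_mult_L by simp
  hence "mtrace (E1 n * C1 * Bt) = (\<Sum>k<n. w k * p k)"
    using mtrace_E1_mult_mult[OF C1_carrier Bt_carrier n_pos] index_mult_mat_sum[OF W_carrier Q_carrier n_pos n_pos]
    by (simp add: w_def p_def)
  also have "\<dots> = t * (\<Sum>i<n. \<mu> (Suc i))"
    by (simp add: mu_Suc sum_distrib_left)
  finally show ?thesis unfolding sum_atLeast1_atMost_shift .
qed

lemma trace_Ct_B1: "mtrace (E1 n * Ct * B1) = - (1/t) * (\<Sum>i=1..n. lm i * (lm i * \<mu> i + beta i))"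
proof -
  have "Ct * B1 = V * R"
    unfolding R_def using assoc_mult_mat[OF V_carrier L_carrier B1_carrier] V_mult_L by simp
  hence "mtrace (E1 n * Ct * B1) = (\<Sum>k<n. u k * y k)"
    using mtrace_E1_mult_mult[OF Ct_carrier B1_carrier n_pos] index_mult_mat_sum[OF V_carrier R_carrier n_pos n_pos]
    by (simp add: u_def y_def)
  also have "\<dots> = (\<Sum>i<n. - (1/t) * (lm (Suc i) * (lm (Suc i) * \<mu> (Suc i) + beta (Suc i))))"
    by (rule sum.cong[OF refl], rule lam_lam_mu_beta[symmetric], simp)
  finally show ?thesis unfolding sum_atLeast1_atMost_shift sum_distrib_left .
qed

lemma trace_C1_diff_Ct_Bt_eq_bilinear:
  "mtrace (E1 n * C1 * (Bt - B1) * E2n n * Ct * Bt)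
    = (\<Sum>i<n. w i * p i * (- (\<Sum>j<i. w j * y j) + D i - (\<Sum>j\<in>{Suc i..<n}. u j * p j)))"
proof -
  have "E1 n * C1 * (Bt - B1) * E2n n * Ct * Bt = E1 n * (W * Z * Q)"
    unfolding Z_def Q_def using derived_carriers L_carrier V_carrier BC_carriers
    by (simp add: assoc_mult_mat[of _ n n _ n _ n] W_mult_L_mult V_mult_L_mult)
  thus ?thesis
    using mtrace_E1_mult[of "W * Z * Q" n] index_mult3_mat_first[OF W_carrier Z_carrier Q_carrier n_pos] derived_carriers n_pos
      sum_bilinear_upper_rank_two[of n "\<lambda>i j. Z $$ (i,j)" D p u y w, OF Z_entries]
    by (simp add: w_def p_def)
qed

lemma trace_Ct_diff_Ct_B1_eq_bilinear:
  "mtrace (E1 n * Ct * (Bt - B1) * E2n n * Ct * B1)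
    = (\<Sum>i<n. u i * y i * (- (\<Sum>j<i. u j * p j) + D i - (\<Sum>j\<in>{Suc i..<n}. w j * y j)))"
proof -
  have "E1 n * Ct * (Bt - B1) * E2n n * Ct * B1 = E1 n * (V * Z * R)"
    unfolding Z_def R_def using derived_carriers L_carrier V_carrier BC_carriers
    by (simp add: assoc_mult_mat[of _ n n _ n _ n] V_mult_L_mult)
  moreover have "\<And>i j. i < n \<Longrightarrow> j < n \<Longrightarrow> Z $$ (i,j)
      = (if j < i then 0 else if j = i then D i else - y i * w j - p i * u j)"
    using Z_entries by (simp add: algebra_simps)
  ultimately show ?thesis
    using mtrace_E1_mult[of "V * Z * R" n] index_mult3_mat_first[OF V_carrier Z_carrier R_carrier n_pos] derived_carriers
      V_carrier n_pos sum_bilinear_upper_rank_two[of n "\<lambda>i j. Z $$ (i,j)" D y w p u]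
    by (simp add: u_def y_def)
qed

lemma trace_C1_diff_Ct_Bt:
  "mtrace (E1 n * C1 * (Bt - B1) * E2n n * Ct * Bt)
    = t * (\<Sum>i=1..n. \<mu> i * (- (\<Sum>j=1..<i. lm j * \<mu> j + beta j) - beta i - \<kappa> (n+i)
                                + (\<Sum>j=i+1..n. lm j * \<mu> j)))"
  unfolding trace_C1_diff_Ct_Bt_eq_bilinear sum_atLeast1_atMost_shift sum_atLeast1_lessThan_shift
    sum_atLeast_Suc_atMost_shift sum_distrib_left
proof (rule sum.cong[OF refl])
  fix i assume "i \<in> {..<n}"
  hence i: "i < n" by simp
  have regroup: "t * (m * (- X - b - k + Y)) = (t * m) * (- X + (- b - k) + Y)" for m X b k Y :: complex
    by (simp add: algebra_simps)
  have "(\<Sum>j<i. lm (Suc j) * \<mu> (Suc j) + beta (Suc j)) = (\<Sum>j<i. w j * y j)"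
    using i by (intro sum.cong) (auto simp: lam_mu_beta)
  moreover have "(\<Sum>j\<in>{Suc i..<n}. lm (Suc j) * \<mu> (Suc j)) = - (\<Sum>j\<in>{Suc i..<n}. u j * p j)"
    by (simp add: lam_mu sum_negf)
  ultimately show "w i * p i * (- (\<Sum>j<i. w j * y j) + D i - (\<Sum>j\<in>{Suc i..<n}. u j * p j))
    = t * (\<mu> (Suc i) * (- (\<Sum>j<i. lm (Suc j) * \<mu> (Suc j) + beta (Suc j)) - beta (Suc i)
        - \<kappa> (n + Suc i) + (\<Sum>j\<in>{Suc i..<n}. lm (Suc j) * \<mu> (Suc j))))"
    unfolding regroup mu_Suc[OF i] D_eq[OF i] by simp
qed

lemma trace_Ct_diff_Ct_B1:
  "mtrace (E1 n * Ct * (Bt - B1) * E2n n * Ct * B1)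
    = - (1/t) * (\<Sum>i=1..n. lm i * (lm i * \<mu> i + beta i)
         * ((\<Sum>j=1..<i. lm j * \<mu> j) - beta i - \<kappa> (n+i) - (\<Sum>j=i+1..n. lm j * \<mu> j + beta j)))"
  unfolding trace_Ct_diff_Ct_B1_eq_bilinear sum_atLeast1_atMost_shift sum_atLeast1_lessThan_shift
    sum_atLeast_Suc_atMost_shift sum_distrib_left
proof (rule sum.cong[OF refl])
  fix i assume "i \<in> {..<n}"
  hence i: "i < n" by simp
  have regroup: "c * (a * (Y - b - k - X)) = (c * a) * (Y + (- b - k) - X)" for c a X b k Y :: complex
    by (simp add: algebra_simps)
  have "(\<Sum>j<i. lm (Suc j) * \<mu> (Suc j)) = - (\<Sum>j<i. u j * p j)"
    using i by (simp add: lam_mu sum_negf)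
  moreover have "(\<Sum>j\<in>{Suc i..<n}. lm (Suc j) * \<mu> (Suc j) + beta (Suc j)) = (\<Sum>j\<in>{Suc i..<n}. w j * y j)"
    by (intro sum.cong) (auto simp: lam_mu_beta)
  ultimately show "u i * y i * (- (\<Sum>j<i. u j * p j) + D i - (\<Sum>j\<in>{Suc i..<n}. w j * y j))
    = - (1/t) * (lm (Suc i) * (lm (Suc i) * \<mu> (Suc i) + beta (Suc i))
        * ((\<Sum>j<i. lm (Suc j) * \<mu> (Suc j)) - beta (Suc i) - \<kappa> (n + Suc i)
           - (\<Sum>j\<in>{Suc i..<n}. lm (Suc j) * \<mu> (Suc j) + beta (Suc j))))"
    unfolding regroup lam_lam_mu_beta[OF i] D_eq[OF i] by simp
qed

end

theorem mainTheorem2: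
  fixes n :: nat and \<theta>t \<theta>1 \<theta>0 t :: complex and \<kappa> :: "nat \<Rightarrow> complex"
    and Bt Ct B1 C1 A0 Ainf :: "complex mat"
  assumes n2: "n \<ge> 2"
    and fuchs: "of_nat n * \<theta>t + of_nat n * \<theta>1 + \<theta>0 + (\<Sum>i=1..2*n. \<kappa> i) = 0"
    and dims: "Bt \<in> carrier_mat n n" "Ct \<in> carrier_mat n n"
              "B1 \<in> carrier_mat n n" "C1 \<in> carrier_mat n n"
    and t0: "t \<noteq> 0"
    and A0: "A0 \<in> carrier_mat (2*n) (2*n)"
            "\<And>i j. i < 2*n \<Longrightarrow> j < 2*n \<Longrightarrow> i \<noteq> 0 \<Longrightarrow> A0 $$ (i,j) = 0"
            "A0 $$ (0,0) = \<theta>0"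
    and Ainf: "Ainf \<in> carrier_mat (2*n) (2*n)"
            "\<And>i. i < 2*n \<Longrightarrow> Ainf $$ (i,i) = \<kappa> (i+1)"
            "\<And>i j. i < 2*n \<Longrightarrow> j < 2*n \<Longrightarrow> i \<noteq> j \<Longrightarrow> j \<noteq> 0 \<Longrightarrow> Ainf $$ (i,j) = 0"
    and sum0: "Atilde n \<theta>t Bt Ct + Atilde n \<theta>1 B1 C1 + A0 + Ainf = 0\<^sub>m (2*n) (2*n)"
    and nz: "\<And>i. 1 \<le> i \<Longrightarrow> i \<le> n \<Longrightarrow> minor Ct [i+1..<n+1] [i+1..<n+1] \<noteq> 0"
            "\<And>i. 1 \<le> i \<Longrightarrow> i \<le> n \<Longrightarrow> minor Ct [i..<n+1] [i..<n+1] \<noteq> 0"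
            "\<And>i. 1 \<le> i \<Longrightarrow> i \<le> n \<Longrightarrow> minor C1 (1 # [i+1..<n+1]) [i..<n+1] \<noteq> 0"
  defines "\<mu> \<equiv> mu n t Bt Ct C1"
    and "lm \<equiv> lam n t Ct C1"
    and "\<beta> \<equiv> (\<lambda>i. if i = 1 then - \<kappa> (n+1) else - \<theta>t - \<theta>1 - \<kappa> i - \<kappa> (n+i))"
  shows "(mtrace (E1 n * Ct * Bt) = - (\<Sum>i=1..n. lm i * \<mu> i))
       \<and> (mtrace (E1 n * C1 * Bt) = t * (\<Sum>i=1..n. \<mu> i))
       \<and> (mtrace (E1 n * Ct * B1) = - (1/t) * (\<Sum>i=1..n. lm i * (lm i * \<mu> i + \<beta> i)))
       \<and> (mtrace (E1 n * C1 * (Bt - B1) * E2n n * Ct * Bt)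
           = t * (\<Sum>i=1..n. \<mu> i * (- (\<Sum>j=1..<i. lm j * \<mu> j + \<beta> j) - \<beta> i - \<kappa> (n+i)
                                    + (\<Sum>j=i+1..n. lm j * \<mu> j))))
       \<and> (mtrace (E1 n * Ct * (Bt - B1) * E2n n * Ct * B1)
           = - (1/t) * (\<Sum>i=1..n. lm i * (lm i * \<mu> i + \<beta> i)
                 * ((\<Sum>j=1..<i. lm j * \<mu> j) - \<beta> i - \<kappa> (n+i)
                    - (\<Sum>j=i+1..n. lm j * \<mu> j + \<beta> j))))"
proof -
  have coords: "residue_coordinates n \<theta>t \<theta>1 t \<kappa> Bt Ct B1 C1"
    using n2 dims t0 residue_sum_blocks[OF dims A0(1,2) Ainf sum0] nz by unfold_locales auto
  have "\<beta> = residue_coordinates.beta n \<theta>t \<theta>1 \<kappa>"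
    unfolding \<beta>_def residue_coordinates.beta_def[OF coords] ..
  then show ?thesis
    unfolding \<mu>_def lm_def
    using residue_coordinates.trace_Ct_Bt[OF coords] residue_coordinates.trace_C1_Bt[OF coords]
      residue_coordinates.trace_Ct_B1[OF coords] residue_coordinates.trace_C1_diff_Ct_Bt[OF coords]
      residue_coordinates.trace_Ct_diff_Ct_B1[OF coords]
    by simp
qed

end
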